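(* Under the degree-corrected stochastic block model $DCSBM(n,P,\Theta,Z)$ with regularizer $\tau\ge0$, let $\tilde\lambda_1,\dots,\tilde\lambda_K$ be the $K$ nonzero eigenvalues of $\tilde F$ (in descending order of magnitude) and $\tilde a_1,\dots,\tilde a_K$ associated unit-norm right eigenvectors. Then: 1) $\tilde\Gamma\tilde F=N^{\mathscr L_\tau}\tilde\Gamma$; 2) the $K$ nonzero eigenvalues of $N^{\mathscr L_\tau}$ are $\tilde\lambda_1,\dots,\tilde\lambda_K$, with associated unit-norm right eigenvectors $$\tilde\eta_k=\sum_{i=1}^K\big[\tilde a_k(i)/\|\tilde\theta^{(i)}\|\big]\,\tilde\theta^{(i)},\qquad k=1,\dots,K.$$
   Context: $n$ nodes, each in exactly one of $K$ nonempty communities, $g_i$ the community of node $i$; $Z\in\{0,1\}^{n\times K}$ with $Z_{ik}=1$ iff $g_i=k$. $P$ is a $K\times K$ symmetric, nonnegative, nonsingular, irreducible matrix; $\theta\in\mathbb{R}^n$ has positive entries, $\Theta=\mathrm{diag}(\theta)$, $\Omega=\Theta ZPZ'\Theta$. Let $\mathscr D$ be the diagonal matrix with $\mathscr D_{ii}=\sum_{j=1}^n\Omega_{ij}$, $\mathscr D_\tau=\mathscr D+\tau I$, and $\mathscr L_\tau=\mathscr D_\tau^{-1/2}\Omega\mathscr D_\tau^{-1/2}$. For a matrix $Y$ with columns $Y_1,\dots,Y_t$, its column-normalized matrix $N^Y$ has $i$-th column $Y_i/\|Y_i\|$ (Euclidean norm); $N^{\mathscr L_\tau}$ is this for $\mathscr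 L_\tau$. Let $\theta_i^\tau=\theta_i\mathscr D_{ii}/(\mathscr D_{ii}+\tau)$, $\tilde\theta\in\mathbb{R}^n$ with $\tilde\theta_i=\sqrt{\theta_i^\tau}$, and for $1\le k\le K$ let $\tilde\theta^{(k)}(i)=\tilde\theta_i$ if $g_i=k$ and $0$ otherwise. Let $\tilde\Gamma$ be the $n\times K$ matrix with $k$-th column $\tilde\theta^{(k)}/\|\tilde\theta^{(k)}\|$, and $\tilde F=\tilde\Gamma'N^{\mathscr L_\tau}\tilde\Gamma$ ($K\times K$). *)

theory Defs
  imports "HOL-Analysis.Analysis"
begin

text \<open>Matrices are Cartesian: nodes form a finite type 'n (n = CARD('n)),
communities a finite type 'k (K = CARD('k)).\<close>

definition diagm :: "real^'n \<Rightarrow> real^'n^'n" where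
  "diagm v = (\<chi> i j. if i = j then v$i else 0)"

definition matpow :: "real^'k^'k \<Rightarrow> nat \<Rightarrow> real^'k^'k" where
  "matpow A m = (((**) A) ^^ m) (mat 1)"

definition irreducible_mat :: "real^'k^'k \<Rightarrow> bool" where
  "irreducible_mat A \<longleftrightarrow> (\<forall>i j. \<exists>m. 0 < matpow A m $ i $ j)"

definition Zmat :: "('n \<Rightarrow> 'k) \<Rightarrow> real^'k^'n" where
  "Zmat g = (\<chi> i k. if g i = k then 1 else 0)"

definition Omega :: "('n \<Rightarrow> 'k) \<Rightarrow> real^'k^'k \<Rightarrow> real^'n \<Rightarrow> real^'n^'n" where
  "Omega g P \<theta> = diagm \<theta> ** Zmat g ** P ** transpose (Zmat g) ** diagm \<theta>"

definition degv :: "('n \<Rightarrow> 'k) \<Rightarrow> real^'k^'k \<Rightarrow> real^'n \<Rightarrow> real^'n" where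
  "degv g P \<theta> = (\<chi> i. \<Sum>j\<in>UNIV. Omega g P \<theta> $ i $ j)"

definition Ltau :: "('n \<Rightarrow> 'k) \<Rightarrow> real^'k^'k \<Rightarrow> real^'n \<Rightarrow> real \<Rightarrow> real^'n^'n" where
  "Ltau g P \<theta> \<tau> =
     (let Dm = diagm (\<chi> i. 1 / sqrt (degv g P \<theta> $ i + \<tau>))
      in Dm ** Omega g P \<theta> ** Dm)"

definition colnorm :: "real^'m^'n \<Rightarrow> real^'m^'n" where
  "colnorm Y = (\<chi> i j. Y $ i $ j / norm (column j Y))"

definition theta_tilde :: "('n \<Rightarrow> 'k) \<Rightarrow> real^'k^'k \<Rightarrow> real^'n \<Rightarrow> real \<Rightarrow> real^'n" where
  "theta_tilde g P \<theta> \<tau> =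
     (\<chi> i. sqrt (\<theta>$i * degv g P \<theta> $ i / (degv g P \<theta> $ i + \<tau>)))"

definition theta_comm :: "('n \<Rightarrow> 'k) \<Rightarrow> real^'n \<Rightarrow> 'k \<Rightarrow> real^'n" where
  "theta_comm g v k = (\<chi> i. if g i = k then v $ i else 0)"

definition Gamma_tilde :: "('n \<Rightarrow> 'k) \<Rightarrow> real^'k^'k \<Rightarrow> real^'n \<Rightarrow> real \<Rightarrow> real^'k^'n" where
  "Gamma_tilde g P \<theta> \<tau> =
     (\<chi> i k. theta_comm g (theta_tilde g P \<theta> \<tau>) k $ i
              / norm (theta_comm g (theta_tilde g P \<theta> \<tau>) k))"

definition F_tilde :: "('n \<Rightarrow> 'k) \<Rightarrow> real^'k^'k \<Rightarrow> real^'n \<Rightarrow> real \<Rightarrow> real^'k^'k" where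
  "F_tilde g P \<theta> \<tau> =
     transpose (Gamma_tilde g P \<theta> \<tau>) ** colnorm (Ltau g P \<theta> \<tau>) ** Gamma_tilde g P \<theta> \<tau>"

end

theory Submission
  imports Defs
begin

(* Let N be the column-normalised L_tau and gamma_i = theta~_i / ||theta~^(g_i)||, so that Gamma~ is
   the membership matrix of g weighted by gamma; its columns are orthonormal.  Entrywise,
   N_ij = gamma_i W(g_i, g_j) for a K x K matrix W, i.e. N = Gamma~ M.  Hence Gamma~ Gamma~' N = N,
   which is claim 1, and the isometry Gamma~ maps unit eigenvectors of F~ to unit eigenvectors of N.
   For the spectrum, N is similar to the matrix acting as F~ on one representative node per
   community and as 0 on the other nodes: take the basis formed by the columns of Gamma~ together
   with the differences e_j - e_rep(g_j), which N annihilates because its columns are constant on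
   communities. *)

lemma sum_UNIV_eq_single:
  "(\<And>x. x \<noteq> a \<Longrightarrow> f x = 0) \<Longrightarrow> (\<Sum>x\<in>(UNIV::'a::finite set). f x) = (f a :: 'b::comm_monoid_add)"
  by (subst sum.remove[of _ a]) auto

lemma matrix_matrix_mult_component:
  "((A::'a::semiring_1^'m^'n) ** B) $ i $ j = (\<Sum>k\<in>UNIV. A$i$k * B$k$j)"
  by (simp add: matrix_matrix_mult_def)

lemma diagm_mult_component: "(diagm v ** A) $ i $ j = v$i * A$i$j"
  unfolding matrix_matrix_mult_component by (subst sum_UNIV_eq_single[where a=i]) (auto simp: diagm_def)

lemma mult_diagm_component:
  fixes A :: "real^'n::finite^'m::finite"
  shows "(A ** diagm v) $ i $ j = A$i$j * v$j"
  unfolding matrix_matrix_mult_component by (subst sum_UNIV_eq_single[where a=j]) (auto simp: diagm_def)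

lemma det_charmat_similar:
  fixes N N' S T :: "'a::field^'n::finite^'n"
  assumes TS: "T ** S = mat 1" and NS: "N ** S = S ** N'"
  shows "det (mat x - N) = det (mat x - N')"
proof -
  have "det T * det S = 1" using TS by (metis det_I det_mul)
  then have "det S \<noteq> 0" by auto
  have "mat x ** S = S ** mat x"
    by (simp add: vec_eq_iff matrix_matrix_mult_def mat_def if_distrib[of "\<lambda>y. y * _"]
        if_distrib[of "\<lambda>y. _ * y"] mult.commute cong: if_cong)
  then have "(mat x - N) ** S = S ** (mat x - N')"
    using NS by (simp add: vec_eq_iff matrix_matrix_mult_def algebra_simps sum_subtractf)
  then have "det (mat x - N) * det S = det S * det (mat x - N')" by (metis det_mul)
  with \<open>det S \<noteq> 0\<close> show ?thesis by simp
qed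

lemma det_eq_sum_permutes_subset:
  fixes A :: "'a::comm_ring_1^'n::finite^'n"
  assumes "\<And>i j. i \<notin> R \<Longrightarrow> j \<noteq> i \<Longrightarrow> A$i$j = 0"
  shows "det A = (\<Sum>p\<in>{p. p permutes R}. of_int (sign p) * (\<Prod>i\<in>UNIV. A$i$p i))"
  unfolding det_def
proof (rule sum.mono_neutral_right)
  show "{p. p permutes R} \<subseteq> {p. p permutes UNIV}" by (auto intro: permutes_subset)
  show "\<forall>p\<in>{p. p permutes UNIV} - {p. p permutes R}. of_int (sign p) * (\<Prod>i\<in>UNIV. A$i$p i) = 0"
  proof
    fix p assume "p \<in> {p. p permutes UNIV} - {p. p permutes R}"
    then obtain i where "i \<notin> R" "p i \<noteq> i"
      using permutes_superset[of p UNIV R] by auto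
    with assms have "A$i$p i = 0" by blast
    then show "of_int (sign p) * (\<Prod>i\<in>UNIV. A$i$p i) = 0"
      by (metis UNIV_I finite mult_zero_right prod_zero)
  qed
qed simp

lemma sum_permutes_range_eq_det:
  fixes B :: "'a::comm_ring_1^'k::finite^'k" and r :: "'k \<Rightarrow> 'n::finite"
  assumes hr: "\<And>k. h (r k) = k"
  shows "(\<Sum>p\<in>{p. p permutes range r}. of_int (sign p) * (\<Prod>k\<in>UNIV. B$k$h (p (r k)))) = det B"
  unfolding det_def
proof (rule sum.reindex_bij_witness[symmetric, where j = "\<lambda>q y. if y \<in> range r then r (q (h y)) else y"
      and i = "\<lambda>p k. h (p (r k))"])
  have injr: "inj r" by (metis hr injI)
  fix q :: "'k \<Rightarrow> 'k" assume "q \<in> {p. p permutes UNIV}"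
  then interpret conjugate: permutes_bij_finite q UNIV "range r" r h "\<lambda>y. if y \<in> range r then r (q (h y)) else y"
    by unfold_locales (use injr hr in \<open>auto simp: bij_betw_def\<close>)
  show "(\<lambda>k. h (if r k \<in> range r then r (q (h (r k))) else r k)) = q"
    using hr by auto
  show "(\<lambda>y. if y \<in> range r then r (q (h y)) else y) \<in> {p. p permutes range r}"
    using conjugate.permutes_p' by simp
  show "of_int (sign (\<lambda>y. if y \<in> range r then r (q (h y)) else y)) *
       (\<Prod>k\<in>UNIV. B $ k $ h (if r k \<in> range r then r (q (h (r k))) else r k)) =
       of_int (sign q) * (\<Prod>i\<in>UNIV. B $ i $ q i)"
    using conjugate.sign_p' hr by auto
next
  fix p assume "p \<in> {p. p permutes range r}"
  then have p: "p permutes range r" by simp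
  have rh: "y \<in> range r \<Longrightarrow> r (h y) = y" for y
    using hr by auto
  interpret conjugate: permutes_bij_finite p "range r" UNIV h r "\<lambda>x. if x \<in> UNIV then h (p (r x)) else x"
    by unfold_locales (use p rh hr in \<open>auto simp: bij_betw_def inj_on_def image_def\<close>)
  show "(\<lambda>k. h (p (r k))) \<in> {p. p permutes UNIV}"
    using conjugate.permutes_p' by simp
  show "(\<lambda>y. if y \<in> range r then r (h (p (r (h y)))) else y) = p"
  proof
    fix y show "(if y \<in> range r then r (h (p (r (h y)))) else y) = p y"
      using rh permutes_in_image[OF p] permutes_not_in[OF p] by auto
  qed
qed

lemma det_embedded_block:
  fixes A :: "'a::comm_ring_1^'n::finite^'n" and B :: "'a^'k::finite^'k" and r :: "'k \<Rightarrow> 'n"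
  assumes hr: "\<And>k. h (r k) = k"
    and A: "\<And>i j. A$i$j = (if i \<in> range r \<and> j \<in> range r then B$h i$h j else if i = j then x else 0)"
  shows "det A = x ^ (CARD('n) - CARD('k)) * det B"
proof -
  have injr: "inj r" by (metis hr injI)
  have card_compl: "card (- range r) = CARD('n) - CARD('k)"
    using card_image[OF injr] by (simp add: Compl_eq_Diff_UNIV card_Diff_subset)
  have prod_split: "(\<Prod>i\<in>UNIV. A$i$p i) = x ^ (CARD('n) - CARD('k)) * (\<Prod>k\<in>UNIV. B$k$h (p (r k)))"
    if p: "p permutes range r" for p
  proof -
    have "(\<Prod>i\<in>UNIV. A$i$p i) = (\<Prod>i\<in>range r. A$i$p i) * (\<Prod>i\<in>- range r. A$i$p i)"
      using prod.union_disjoint[of "range r" "- range r" "\<lambda>i. A$i$p i"] by (simp add: Compl_partition)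
    also have "(\<Prod>i\<in>- range r. A$i$p i) = (\<Prod>i\<in>- range r. x)"
      using permutes_not_in[OF p] A by (intro prod.cong) auto
    also have "\<dots> = x ^ (CARD('n) - CARD('k))"
      using card_compl by simp
    also have "(\<Prod>i\<in>range r. A$i$p i) = (\<Prod>k\<in>UNIV. B$k$h (p (r k)))"
      using permutes_in_image[OF p] A hr by (simp add: prod.reindex[OF injr])
    finally show ?thesis by simp
  qed
  have "det A = (\<Sum>p\<in>{p. p permutes range r}. of_int (sign p) * (\<Prod>i\<in>UNIV. A$i$p i))"
    by (rule det_eq_sum_permutes_subset) (simp add: A)
  also have "\<dots> = (\<Sum>p\<in>{p. p permutes range r}.
      x ^ (CARD('n) - CARD('k)) * (of_int (sign p) * (\<Prod>k\<in>UNIV. B$k$h (p (r k)))))"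
    by (rule sum.cong) (simp_all add: prod_split mult.left_commute)
  also have "\<dots> = x ^ (CARD('n) - CARD('k)) * det B"
    unfolding sum_distrib_left[symmetric] sum_permutes_range_eq_det[of h r B, OF hr] ..
  finally show ?thesis .
qed

definition membership_mat :: "('n \<Rightarrow> 'k) \<Rightarrow> ('n \<Rightarrow> real) \<Rightarrow> real^'k^'n" where
  "membership_mat g \<gamma> = (\<chi> i k. if g i = k then \<gamma> i else 0)"

lemma transpose_membership_mat_mult_self:
  fixes g :: "'n::finite \<Rightarrow> 'k::finite"
  assumes unit: "\<And>k. (\<Sum>i | g i = k. (\<gamma> i)\<^sup>2) = 1"
  shows "transpose (membership_mat g \<gamma>) ** membership_mat g \<gamma> = mat 1"
proof -
  have "(\<Sum>i\<in>UNIV. (if g i = k then \<gamma> i else 0) * (if g i = l then \<gamma> i else 0))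
      = (if k = l then 1 else 0)" for k l
    using unit by (simp add: sum.If_cases power2_eq_square if_distrib[of "\<lambda>x. x * _"] cong: if_cong)
  then show ?thesis
    by (simp add: vec_eq_iff matrix_matrix_mult_def membership_mat_def transpose_def mat_def)
qed

lemma block_structured_eq_membership_mat_mult:
  assumes "\<And>i j. N$i$j = \<gamma> i * W (g i) (g j)"
  shows "N = membership_mat g \<gamma> ** (\<chi> k j. W k (g j))"
  using assms unfolding vec_eq_iff matrix_matrix_mult_component membership_mat_def
  by (simp add: if_distrib[of "\<lambda>x. x * _"] cong: if_cong)

lemma mult_transpose_mult_eq_if_orthonormal_columns:
  fixes G :: "real^'k::finite^'n::finite"
  assumes "transpose G ** G = mat 1" and "N = G ** M"
  shows "G ** (transpose G ** N ** G) = N ** G"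
  using assms by (simp add: matrix_mul_assoc)

lemma norm_mult_vec_orthonormal_columns:
  fixes G :: "real^'k::finite^'n::finite"
  assumes "transpose G ** G = mat 1"
  shows "norm (G *v a) = norm a"
proof -
  have "inner (G *v a) (G *v a) = inner ((G *v a) v* G) a"
    by (simp add: dot_lmul_matrix)
  also have "(G *v a) v* G = a"
    using assms by (simp flip: transpose_matrix_vector add: matrix_vector_mul_assoc)
  finally show ?thesis by (simp add: norm_eq_sqrt_inner)
qed

lemma intertwining_eigenvector:
  fixes G :: "real^'k::finite^'n::finite"
  assumes "N ** G = G ** F" and "F *v a = c *s a"
  shows "N *v (G *v a) = c *s (G *v a)"
proof -
  have "N *v (G *v a) = G *v (F *v a)"
    using assms(1) by (simp add: matrix_vector_mul_assoc)
  then show ?thesis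
    using assms(2) by (simp add: vector_scalar_commute)
qed

(* Since g is surjective, inv g k is a representative node of community k. *)
definition community_basis :: "('n \<Rightarrow> 'k) \<Rightarrow> ('n \<Rightarrow> real) \<Rightarrow> real^'n^'n" where
  "community_basis g \<gamma> = (\<chi> i j.
     if inv g (g j) = j then (if g i = g j then \<gamma> i else 0)
     else (if i = j then 1 else 0) - (if i = inv g (g j) then 1 else 0))"

definition community_basis_inv :: "('n \<Rightarrow> 'k) \<Rightarrow> ('n \<Rightarrow> real) \<Rightarrow> real^'n^'n" where
  "community_basis_inv g \<gamma> = (\<chi> a i.
     (if inv g (g a) \<noteq> a \<and> i = a then 1 else 0)
     + (if g i = g a then (if inv g (g a) = a then 1 else - \<gamma> a) / (\<Sum>l | g l = g a. \<gamma> l) else 0))"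

lemma community_sum_community_basis:
  fixes g :: "'n::finite \<Rightarrow> 'k::finite"
  assumes "surj g"
  shows "(\<Sum>i | g i = k. community_basis g \<gamma> $ i $ b)
    = (if inv g (g b) = b \<and> g b = k then (\<Sum>l | g l = k. \<gamma> l) else 0)"
proof (cases "inv g (g b) = b")
  case True
  have "(\<Sum>i | g i = k. community_basis g \<gamma> $ i $ b) = (\<Sum>i | g i = k. if g b = k then \<gamma> i else 0)"
    using True by (intro sum.cong) (auto simp: community_basis_def)
  then show ?thesis
    using True by simp
next
  case False
  have "(\<Sum>i | g i = k. community_basis g \<gamma> $ i $ b)
      = (\<Sum>i | g i = k. if i = b then 1 else 0) - (\<Sum>i | g i = k. if i = inv g (g b) then 1 else 0)"
    using False by (simp add: community_basis_def sum_subtractf)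
  also have "\<dots> = 0"
    by (simp add: sum.delta' surj_f_inv_f[OF assms])
  finally show ?thesis
    using False by simp
qed

lemma community_basis_inv_mult_component:
  fixes g :: "'n::finite \<Rightarrow> 'k" and S :: "real^'n^'n"
  shows "(community_basis_inv g \<gamma> ** S) $ a $ b
    = (if inv g (g a) \<noteq> a then S $ a $ b else 0)
      + (if inv g (g a) = a then 1 else - \<gamma> a) / (\<Sum>l | g l = g a. \<gamma> l) * (\<Sum>i | g i = g a. S $ i $ b)"
proof -
  define c where "c = (if inv g (g a) = a then 1 else - \<gamma> a) / (\<Sum>l | g l = g a. \<gamma> l)"
  have "community_basis_inv g \<gamma> $ a $ i
      = (if inv g (g a) \<noteq> a \<and> i = a then 1 else 0) + (if g i = g a then c else 0)" for i
    by (simp add: community_basis_inv_def c_def)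
  then have "(community_basis_inv g \<gamma> ** S) $ a $ b
      = (\<Sum>i\<in>UNIV. if inv g (g a) \<noteq> a \<and> i = a then S $ i $ b else 0)
        + (\<Sum>i\<in>UNIV. if g i = g a then c * S $ i $ b else 0)"
    by (simp add: matrix_matrix_mult_component distrib_right sum.distrib if_distrib[of "\<lambda>x. x * _"]
        cong: if_cong)
  also have "\<dots> = (if inv g (g a) \<noteq> a then S $ a $ b else 0) + c * (\<Sum>i | g i = g a. S $ i $ b)"
    by (simp add: sum.inter_filter[symmetric] sum_distrib_left)
  finally show ?thesis
    unfolding c_def .
qed

lemma community_basis_inv_mult_community_basis:
  fixes g :: "'n::finite \<Rightarrow> 'k::finite"
  assumes "surj g" and community_sum_nz: "\<And>k. (\<Sum>l | g l = k. \<gamma> l) \<noteq> 0"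
  shows "community_basis_inv g \<gamma> ** community_basis g \<gamma> = mat 1"
proof -
  have "(community_basis_inv g \<gamma> ** community_basis g \<gamma>) $ a $ b = (if a = b then 1 else 0)" for a b
  proof (cases "inv g (g a) = a")
    case True
    then have "inv g (g b) = b \<and> g b = g a \<longleftrightarrow> a = b" by metis
    with True show ?thesis
      using community_sum_nz
      by (auto simp: community_basis_inv_mult_component community_sum_community_basis[OF assms(1)])
  next
    case False
    then have "a \<noteq> inv g (g b)"
      using surj_f_inv_f[OF assms(1)] by metis
    then have "community_basis g \<gamma> $ a $ b
        = (if inv g (g b) = b then (if g a = g b then \<gamma> a else 0) else (if a = b then 1 else 0))"
      by (simp add: community_basis_def)
    with False show ?thesis
      using community_sum_nz[of "g a"]
      by (auto simp: community_basis_inv_mult_component community_sum_community_basis[OF assms(1)])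
  qed
  then show ?thesis by (simp add: vec_eq_iff mat_def)
qed

lemma mult_community_basis:
  fixes g :: "'n::finite \<Rightarrow> 'k::finite" and N :: "real^'n^'n" and F :: "real^'k^'k"
  assumes "surj g"
    and columns_constant: "\<And>i j j'. g j = g j' \<Longrightarrow> N$i$j = N$i$j'"
    and intertwines: "N ** membership_mat g \<gamma> = membership_mat g \<gamma> ** F"
  shows "N ** community_basis g \<gamma>
    = community_basis g \<gamma> ** (\<chi> i j. if inv g (g i) = i \<and> inv g (g j) = j then F $ g i $ g j else 0)"
    (is "_ = _ ** ?F'")
proof -
  have "(N ** community_basis g \<gamma>) $ i $ j = (community_basis g \<gamma> ** ?F') $ i $ j" for i j
  proof (cases "inv g (g j) = j")
    case True
    have "(N ** community_basis g \<gamma>) $ i $ j = (N ** membership_mat g \<gamma>) $ i $ g j"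
      using True by (simp add: matrix_matrix_mult_component community_basis_def membership_mat_def)
    also have "\<dots> = (membership_mat g \<gamma> ** F) $ i $ g j"
      by (simp add: intertwines)
    also have "\<dots> = \<gamma> i * F $ g i $ g j"
      by (simp add: matrix_matrix_mult_component membership_mat_def if_distrib[of "\<lambda>x. x * _"]
          cong: if_cong)
    also have "\<dots> = (community_basis g \<gamma> ** ?F') $ i $ j"
      unfolding matrix_matrix_mult_component using True surj_f_inv_f[OF assms(1)]
      by (subst sum_UNIV_eq_single[where a="inv g (g i)"]) (auto simp: community_basis_def)
    finally show ?thesis .
  next
    case False
    have "(N ** community_basis g \<gamma>) $ i $ j = N $ i $ j - N $ i $ inv g (g j)"
      using False by (simp add: matrix_matrix_mult_component community_basis_def right_diff_distrib
          sum_subtractf if_distrib[of "\<lambda>x. _ * x"] cong: if_cong)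
    also have "\<dots> = 0"
      using columns_constant[where j="inv g (g j)" and j'=j] surj_f_inv_f[OF assms(1)] by simp
    also have "\<dots> = (community_basis g \<gamma> ** ?F') $ i $ j"
      using False by (simp add: matrix_matrix_mult_component)
    finally show ?thesis .
  qed
  then show ?thesis by (simp add: vec_eq_iff)
qed

lemma det_charmat_membership_intertwined:
  fixes g :: "'n::finite \<Rightarrow> 'k::finite" and N :: "real^'n^'n" and F :: "real^'k^'k"
  assumes "surj g"
    and weights_pos: "\<And>i. 0 < \<gamma> i"
    and columns_constant: "\<And>i j j'. g j = g j' \<Longrightarrow> N$i$j = N$i$j'"
    and intertwines: "N ** membership_mat g \<gamma> = membership_mat g \<gamma> ** F"
  shows "det (mat x - N) = x ^ (CARD('n) - CARD('k)) * det (mat x - F)"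
proof -
  let ?F' = "\<chi> i j. if inv g (g i) = i \<and> inv g (g j) = j then F $ g i $ g j else 0"
  have "(\<Sum>l | g l = k. \<gamma> l) \<noteq> 0" for k
  proof -
    obtain i where "g i = k"
      using assms(1) by (metis surjD)
    then have "0 < (\<Sum>l | g l = k. \<gamma> l)"
      using weights_pos by (intro sum_pos2[where i=i]) (auto intro: less_imp_le)
    then show ?thesis by simp
  qed
  with assms(1) have "community_basis_inv g \<gamma> ** community_basis g \<gamma> = mat 1"
    by (rule community_basis_inv_mult_community_basis)
  moreover have "N ** community_basis g \<gamma> = community_basis g \<gamma> ** ?F'"
    using assms(1,3,4) by (rule mult_community_basis)
  ultimately have "det (mat x - N) = det (mat x - ?F')"
    by (rule det_charmat_similar)
  also have "\<dots> = x ^ (CARD('n) - CARD('k)) * det (mat x - F)"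
  proof (rule det_embedded_block)
    show "g (inv g k) = k" for k
      using surj_f_inv_f[OF assms(1)] .
    have "i \<in> range (inv g) \<longleftrightarrow> inv g (g i) = i" for i
    proof
      show "i \<in> range (inv g) \<Longrightarrow> inv g (g i) = i"
        using surj_f_inv_f[OF assms(1)] by auto
    qed (metis rangeI)
    then show "(mat x - ?F') $ i $ j = (if i \<in> range (inv g) \<and> j \<in> range (inv g)
        then (mat x - F) $ g i $ g j else if i = j then x else 0)" for i j
      by (auto simp: mat_def)
  qed
  finally show ?thesis .
qed

lemma row_nonzero_if_invertible:
  fixes A :: "'a::field^'n::finite^'n"
  assumes "invertible A"
  shows "\<exists>j. A$i$j \<noteq> 0"
proof (rule ccontr)
  assume "\<nexists>j. A$i$j \<noteq> 0"
  then have "row i A = 0" by (simp add: row_def vec_eq_iff)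
  then have "det A = 0" by (rule det_zero_row(2))
  with assms show False by (simp add: invertible_det_nz)
qed

lemma Zmat_mult_component: "(Zmat g ** A) $ i $ j = A $ g i $ j"
  unfolding matrix_matrix_mult_component Zmat_def
  by (simp add: if_distrib[of "\<lambda>x. x * _"] cong: if_cong)

lemma mult_transpose_Zmat_component: "(A ** transpose (Zmat g)) $ i $ j = A $ i $ g j"
  unfolding matrix_matrix_mult_component Zmat_def transpose_def
  by (simp add: if_distrib[of "\<lambda>x. _ * x"] cong: if_cong)

lemma Omega_component: "Omega g P \<theta> $ i $ j = \<theta>$i * P$g i$g j * \<theta>$j"
  unfolding Omega_def mult_diagm_component mult_transpose_Zmat_component
  by (simp add: matrix_mul_assoc[symmetric] diagm_mult_component Zmat_mult_component)

definition community_degree :: "('n::finite \<Rightarrow> 'k) \<Rightarrow> real^'k^'k \<Rightarrow> real^'n \<Rightarrow> 'k \<Rightarrow> real" where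
  "community_degree g P \<theta> k = (\<Sum>j\<in>UNIV. P$k$g j * \<theta>$j)"

lemma degv_component: "degv g P \<theta> $ i = \<theta>$i * community_degree g P \<theta> (g i)"
  by (simp add: degv_def community_degree_def Omega_component sum_distrib_left mult.assoc)

lemma community_degree_pos:
  assumes "surj g" and "\<forall>k l. 0 \<le> P$k$l" and "invertible P" and "\<forall>j. 0 < \<theta>$j"
  shows "0 < community_degree g P \<theta> k"
proof -
  obtain l where l: "P$k$l \<noteq> 0"
    using row_nonzero_if_invertible[OF assms(3)] by blast
  with assms(2) have "0 < P$k$l"
    by (simp add: order_less_le)
  obtain j where "g j = l"
    using assms(1) by (metis surjD)
  with \<open>0 < P$k$l\<close> assms(4) have "0 < P$k$g j * \<theta>$j"
    by simp
  then show ?thesis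
    unfolding community_degree_def using assms(2,4)
    by (intro sum_pos2[where i=j]) (auto simp: less_imp_le)
qed

definition theta_reg :: "('n::finite \<Rightarrow> 'k) \<Rightarrow> real^'k^'k \<Rightarrow> real^'n \<Rightarrow> real \<Rightarrow> 'n \<Rightarrow> real" where
  "theta_reg g P \<theta> \<tau> i = \<theta>$i / sqrt (degv g P \<theta> $ i + \<tau>)"

lemma Ltau_component:
  "Ltau g P \<theta> \<tau> $ i $ j = theta_reg g P \<theta> \<tau> i * P$g i$g j * theta_reg g P \<theta> \<tau> j"
  unfolding Ltau_def Let_def mult_diagm_component diagm_mult_component Omega_component theta_reg_def
  by simp

lemma colnorm_block_component:
  fixes Y :: "real^'n::finite^'n"
  assumes Y: "\<And>i j. Y$i$j = \<phi> i * W (g i) (g j) * \<phi> j" and "0 < \<phi> j"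
  shows "colnorm Y $ i $ j = \<phi> i * W (g i) (g j) / norm (\<chi> l. \<phi> l * W (g l) (g j))"
proof -
  have "column j Y = \<phi> j *\<^sub>R (\<chi> l. \<phi> l * W (g l) (g j))"
    by (simp add: column_def Y vec_eq_iff)
  then have "norm (column j Y) = \<phi> j * norm (\<chi> l. \<phi> l * W (g l) (g j))"
    using \<open>0 < \<phi> j\<close> by simp
  then show ?thesis
    using \<open>0 < \<phi> j\<close> by (simp add: colnorm_def Y)
qed

lemma theta_tilde_component:
  assumes "0 < \<theta>$i" and "0 < community_degree g P \<theta> (g i)" and "0 \<le> \<tau>"
  shows "theta_tilde g P \<theta> \<tau> $ i = theta_reg g P \<theta> \<tau> i * sqrt (community_degree g P \<theta> (g i))"
proof -
  have pos: "0 < degv g P \<theta> $ i + \<tau>"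
    using assms by (simp add: degv_component add_pos_nonneg)
  then have "\<theta>$i * degv g P \<theta> $ i / (degv g P \<theta> $ i + \<tau>)
      = (theta_reg g P \<theta> \<tau> i)\<^sup>2 * community_degree g P \<theta> (g i)"
    by (simp add: theta_reg_def degv_component power_divide power2_eq_square)
  moreover have "0 \<le> theta_reg g P \<theta> \<tau> i"
    using assms(1) pos by (simp add: theta_reg_def)
  ultimately show ?thesis
    by (simp add: theta_tilde_def real_sqrt_mult)
qed

lemma theta_tilde_pos:
  assumes "0 < \<theta>$i" and "0 < community_degree g P \<theta> (g i)" and "0 \<le> \<tau>"
  shows "0 < theta_tilde g P \<theta> \<tau> $ i"
  using assms by (simp add: theta_tilde_def degv_component add_pos_nonneg)

definition community_normalized :: "('n \<Rightarrow> 'k) \<Rightarrow> real^'n \<Rightarrow> 'n \<Rightarrow> real" where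
  "community_normalized g v i = v$i / norm (theta_comm g v (g i))"

lemma norm_theta_comm_pos:
  assumes "surj g" and "\<forall>i. 0 < v$i"
  shows "0 < norm (theta_comm g v k)"
proof -
  obtain i where "g i = k"
    using assms(1) by (metis surjD)
  with assms(2) have "theta_comm g v k $ i \<noteq> 0"
    by (simp add: theta_comm_def less_imp_neq[symmetric])
  then show ?thesis
    by (metis zero_less_norm_iff zero_index)
qed

lemma sum_community_normalized_squares:
  fixes g :: "'n::finite \<Rightarrow> 'k"
  assumes "theta_comm g v k \<noteq> 0"
  shows "(\<Sum>i | g i = k. (community_normalized g v i)\<^sup>2) = 1"
proof -
  have "(\<Sum>i | g i = k. (v$i)\<^sup>2) = (norm (theta_comm g v k))\<^sup>2"
    by (simp add: norm_vec_def L2_set_def theta_comm_def sum.If_cases if_distrib[of power2] sum_nonneg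
        cong: if_cong)
  moreover have "(norm (theta_comm g v k))\<^sup>2 \<noteq> 0"
    using assms by simp
  moreover have "(\<Sum>i | g i = k. (community_normalized g v i)\<^sup>2)
      = (\<Sum>i | g i = k. (v$i)\<^sup>2) / (norm (theta_comm g v k))\<^sup>2"
    by (simp add: community_normalized_def power_divide sum_divide_distrib)
  ultimately show ?thesis
    by simp
qed

lemma Gamma_tilde_eq_membership_mat:
  "Gamma_tilde g P \<theta> \<tau> = membership_mat g (community_normalized g (theta_tilde g P \<theta> \<tau>))"
  by (simp add: Gamma_tilde_def membership_mat_def community_normalized_def theta_comm_def vec_eq_iff)

lemma Gamma_tilde_mult_vec:
  "Gamma_tilde g P \<theta> \<tau> *v a = (\<Sum>k\<in>UNIV. (a$k / norm (theta_comm g (theta_tilde g P \<theta> \<tau>) k))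
      *s theta_comm g (theta_tilde g P \<theta> \<tau>) k)"
  by (simp add: matrix_mult_sum column_def Gamma_tilde_def vec_eq_iff sum_component mult.commute)

lemma community_normalized_pos:
  assumes "surj g" and "\<forall>i. 0 < v$i"
  shows "0 < community_normalized g v i"
  using norm_theta_comm_pos[OF assms, of "g i"] assms(2) by (simp add: community_normalized_def)

lemma transpose_membership_mat_community_normalized:
  fixes g :: "'n::finite \<Rightarrow> 'k::finite"
  assumes "surj g" and "\<forall>i. 0 < v$i"
  shows "transpose (membership_mat g (community_normalized g v)) ** membership_mat g (community_normalized g v)
    = mat 1"
  using norm_theta_comm_pos[OF assms]
  by (intro transpose_membership_mat_mult_self sum_community_normalized_squares) auto

lemma colnorm_Ltau_block:
  assumes "surj g" and "\<forall>j. 0 < \<theta>$j" and "\<forall>k. 0 < community_degree g P \<theta> k" and "0 \<le> \<tau>"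
  shows "\<exists>W. \<forall>i j. colnorm (Ltau g P \<theta> \<tau>) $ i $ j
    = community_normalized g (theta_tilde g P \<theta> \<tau>) i * W (g i) (g j)"
proof -
  let ?\<phi> = "theta_reg g P \<theta> \<tau>" and ?d = "community_degree g P \<theta>"
    and ?\<nu> = "\<lambda>k. norm (theta_comm g (theta_tilde g P \<theta> \<tau>) k)"
  have "0 < ?\<phi> j" for j
    using assms by (simp add: theta_reg_def degv_component add_pos_nonneg)
  then have "colnorm (Ltau g P \<theta> \<tau>) $ i $ j = ?\<phi> i * P$g i$g j / norm (\<chi> l. ?\<phi> l * P$g l$g j)" for i j
    by (intro colnorm_block_component[where W = "\<lambda>k l. P$k$l"]) (rule Ltau_component)
  also have "\<dots> i j = community_normalized g (theta_tilde g P \<theta> \<tau>) i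
      * (?\<nu> (g i) * P$g i$g j / (sqrt (?d (g i)) * norm (\<chi> l. ?\<phi> l * P$g l$g j)))" for i j
  proof -
    have "0 < ?\<nu> (g i)"
      using assms by (intro norm_theta_comm_pos) (auto simp: theta_tilde_pos)
    then show ?thesis
      using assms theta_tilde_component[of \<theta> i g P \<tau>]
      by (simp add: community_normalized_def less_imp_neq[symmetric])
  qed
  finally show ?thesis
    by (intro exI[of _ "\<lambda>k l. ?\<nu> k * P$k$l / (sqrt (?d k) * norm (\<chi> m. ?\<phi> m * P$g m$l))"]) simp
qed

theorem lemma5:
  fixes g :: "'n::finite \<Rightarrow> 'k::finite"
    and P :: "real^'k^'k" and \<theta> :: "real^'n" and \<tau> :: real
    and lam :: "nat \<Rightarrow> real" and a :: "nat \<Rightarrow> real^'k"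
  assumes comm_nonempty: "surj g"
    and P_sym: "transpose P = P"
    and P_nonneg: "\<forall>i j. 0 \<le> P $ i $ j"
    and P_nonsing: "invertible P"
    and P_irred: "irreducible_mat P"
    and theta_pos: "\<forall>i. 0 < \<theta> $ i"
    and tau_nonneg: "0 \<le> \<tau>"
    and F_eigs: "\<forall>x. det (mat x - F_tilde g P \<theta> \<tau>) = (\<Prod>k<CARD('k). (x - lam k))"
    and lam_nonzero: "\<forall>k<CARD('k). lam k \<noteq> 0"
    and lam_order: "\<forall>i j. i \<le> j \<and> j < CARD('k) \<longrightarrow> \<bar>lam j\<bar> \<le> \<bar>lam i\<bar>"
    and a_eig: "\<forall>k<CARD('k). F_tilde g P \<theta> \<tau> *v a k = lam k *s a k \<and> norm (a k) = 1"
  shows "Gamma_tilde g P \<theta> \<tau> ** F_tilde g P \<theta> \<tau>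
           = colnorm (Ltau g P \<theta> \<tau>) ** Gamma_tilde g P \<theta> \<tau>
         \<and> (\<forall>x. det (mat x - colnorm (Ltau g P \<theta> \<tau>))
                 = x ^ (CARD('n) - CARD('k)) * (\<Prod>k<CARD('k). (x - lam k)))
         \<and> (\<forall>k<CARD('k).
              (let \<eta> = (\<Sum>i\<in>UNIV. (a k $ i / norm (theta_comm g (theta_tilde g P \<theta> \<tau>) i))
                                    *s theta_comm g (theta_tilde g P \<theta> \<tau>) i)
               in colnorm (Ltau g P \<theta> \<tau>) *v \<eta> = lam k *s \<eta> \<and> norm \<eta> = 1))"
proof -
  let ?tt = "theta_tilde g P \<theta> \<tau>"
  let ?\<gamma> = "community_normalized g ?tt"
  let ?G = "Gamma_tilde g P \<theta> \<tau>" and ?N = "colnorm (Ltau g P \<theta> \<tau>)" and ?F = "F_tilde g P \<theta> \<tau>"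
  have degree_pos: "\<forall>k. 0 < community_degree g P \<theta> k"
    using community_degree_pos[OF comm_nonempty P_nonneg P_nonsing theta_pos] by blast
  then have tt_pos: "\<forall>i. 0 < ?tt $ i"
    using theta_pos tau_nonneg by (simp add: theta_tilde_pos)
  have G: "?G = membership_mat g ?\<gamma>"
    by (rule Gamma_tilde_eq_membership_mat)
  have orth: "transpose ?G ** ?G = mat 1"
    unfolding G using comm_nonempty tt_pos by (rule transpose_membership_mat_community_normalized)
  obtain W where block: "\<forall>i j. ?N$i$j = ?\<gamma> i * W (g i) (g j)"
    using colnorm_Ltau_block[OF comm_nonempty theta_pos degree_pos tau_nonneg] by blast
  have claim1: "?G ** ?F = ?N ** ?G"
    unfolding F_tilde_def
    by (rule mult_transpose_mult_eq_if_orthonormal_columns[OF orth])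
      (simp add: G block_structured_eq_membership_mat_mult[where W=W, OF block[rule_format]])
  have "det (mat x - ?N) = x ^ (CARD('n) - CARD('k)) * det (mat x - ?F)" for x
    using community_normalized_pos[OF comm_nonempty tt_pos] block claim1[symmetric]
    by (intro det_charmat_membership_intertwined[OF comm_nonempty, of ?\<gamma>]) (auto simp: G)
  moreover have "?N *v (?G *v a k) = lam k *s (?G *v a k) \<and> norm (?G *v a k) = 1"
    if "k < CARD('k)" for k
    using a_eig that claim1[symmetric]
    by (simp add: intertwining_eigenvector norm_mult_vec_orthonormal_columns[OF orth])
  ultimately show ?thesis
    using claim1 F_eigs by (simp add: Gamma_tilde_mult_vec[symmetric])
qed

end
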